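(* Let $k > 0$, let $\mathcal{J} \subseteq \{1,\dots,n\}$ be nonempty, let ${\mathbf{x}}^* = k\sum_{j\in\mathcal{J}} {\mathbf{e}}_j$, and suppose there is a vector ${\mathbf{c}}$ with $$\frac{P {\mathbf{e}}_j}{\| P {\mathbf{e}}_j \|_2} \cdot {\mathbf{c}} = 1 \ \ \forall j \in \mathcal{J}, \qquad \frac{P {\mathbf{e}}_i}{\| P {\mathbf{e}}_i \|_2} \cdot {\mathbf{c}} < 1 \ \ \forall i \in \mathcal{J}^c.$$ Define $g: S \to \mathbb{R}$ by $$g(s) = \min_{0 \leq {\mathbf{x}} \leq s} \| W {\mathbf{x}} \|_1 \quad \text{subject to} \quad A {\mathbf{x}} = A {\mathbf{x}}^*.$$ Then $g$ is non-increasing in $s$, and $$g(s) > \|W{\mathbf{x}}^*\|_1 \ \text{ for } s \in [0,k)\cap S, \qquad g(s) = \|W{\mathbf{x}}^*\|_1 \ \text{ for } s \geq k.$$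
   Context: $A \in \mathbb{R}^{m\times n}$ is a matrix, $A^\dagger$ its Moore–Penrose pseudoinverse, and $P = A^\dagger A$ the orthogonal projection onto $\mathcal{N}(A)^\perp$. ${\mathbf{e}}_1,\dots,{\mathbf{e}}_n$ are the standard unit vectors, assumed not to lie in $\mathcal{N}(A)$, so $w_i := \|P{\mathbf{e}}_i\|_2 > 0$; $W = \mathrm{diag}(w_1,\dots,w_n)$. $S$ is the set of $s \ge 0$ for which there exists ${\mathbf{x}}\in\mathbb{R}^n$ with $0 \le {\mathbf{x}} \le s$ (componentwise) and $A{\mathbf{x}} = A{\mathbf{x}}^*$, i.e., the values of $s$ for which the constraint set defining $g(s)$ is nonempty. *)

theory Defs
  imports "HOL-Analysis.Analysis"
begin

definition pinv :: "real^'n^'m \<Rightarrow> real^'m^'n" where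
  "pinv A = (THE X. A ** X ** A = A \<and> X ** A ** X = X \<and>
                    transpose (A ** X) = A ** X \<and> transpose (X ** A) = X ** A)"

definition projP :: "real^'n^'m \<Rightarrow> real^'n^'n" where
  "projP A = pinv A ** A"

definition wts :: "real^'n^'m \<Rightarrow> 'n \<Rightarrow> real" where
  "wts A i = norm (projP A *v axis i 1)"

definition wl1 :: "real^'n^'m \<Rightarrow> real^'n \<Rightarrow> real" where
  "wl1 A x = (\<Sum>i\<in>UNIV. \<bar>wts A i * x $ i\<bar>)"

definition feas :: "real^'n^'m \<Rightarrow> real^'n \<Rightarrow> real \<Rightarrow> (real^'n) set" where
  "feas A xs s = {x. (\<forall>i. 0 \<le> x $ i \<and> x $ i \<le> s) \<and> A *v x = A *v xs}"

definition Sset :: "real^'n^'m \<Rightarrow> real^'n \<Rightarrow> real set" where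
  "Sset A xs = {s. 0 \<le> s \<and> feas A xs s \<noteq> {}}"

text \<open>g(s) = min of the weighted l1 norm over the feasible set (the minimum is attained
  for s in S, so it coincides with the infimum)\<close>
definition gfun :: "real^'n^'m \<Rightarrow> real^'n \<Rightarrow> real \<Rightarrow> real" where
  "gfun A xs s = Inf (wl1 A ` feas A xs s)"

end

theory Submission
  imports Defs
begin

text \<open>
  The vector \<open>c\<close> is a dual certificate. Writing \<open>a\<^sub>i\<close> for the coefficient in the hypotheses,
  the linear functional \<open>x \<mapsto> c \<bullet> (P x) = \<Sum>\<^sub>i w\<^sub>i a\<^sub>i x\<^sub>i\<close> depends only on \<open>A x\<close>, hence is constant
  on the feasible set, and since \<open>a\<^sub>i \<le> 1\<close> it bounds \<open>\<parallel>W x\<parallel>\<^sub>1\<close> from below for \<open>x \<ge> 0\<close>, with equality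
  at \<open>x\<^sup>*\<close>. So \<open>x\<^sup>*\<close> is optimal as soon as it is feasible, i.e. for \<open>s \<ge> k\<close>. Equality forces a
  minimiser to vanish off \<open>\<J>\<close> (where \<open>a\<^sub>i < 1\<close>), and then its entries \<open>\<le> s < k\<close> on \<open>\<J>\<close> make its
  cost strictly smaller than that of \<open>x\<^sup>*\<close>, a contradiction.
\<close>

definition cert_coeff :: "real^'n::finite^'m::finite \<Rightarrow> real^'n \<Rightarrow> 'n \<Rightarrow> real" where
  "cert_coeff A c i = ((1 / norm (projP A *v axis i 1)) *\<^sub>R (projP A *v axis i 1)) \<bullet> c"

lemma wl1_nonneg: "0 \<le> wl1 A x"
  unfolding wl1_def by (simp add: sum_nonneg)

lemma continuous_on_wl1: "continuous_on S (wl1 A)"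
  unfolding wl1_def by (intro continuous_intros)

lemma compact_feas: "compact (feas (A::real^'n::finite^'m::finite) xs s)"
proof -
  have "feas A xs s = cbox 0 (\<chi> i. s) \<inter> {x. A *v x = A *v xs}"
    by (auto simp: feas_def mem_box_cart)
  moreover have "closed {x. A *v x = A *v xs}"
    by (intro closed_Collect_eq continuous_on_const matrix_vector_mult_linear_continuous_on)
  ultimately show ?thesis by (simp add: compact_Int_closed)
qed

lemma feas_mono: "s \<le> t \<Longrightarrow> feas A xs s \<subseteq> feas A xs t"
  by (auto simp: feas_def intro: order_trans)

lemma gfun_eq_minimum:
  assumes "x \<in> feas A xs s" and "\<And>y. y \<in> feas A xs s \<Longrightarrow> wl1 A x \<le> wl1 A y"
  shows "gfun A xs s = wl1 A x"
  unfolding gfun_def using assms by (intro cInf_eq_minimum) auto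

lemma gfun_attained:
  assumes "s \<in> Sset A xs"
  obtains x where "x \<in> feas A xs s" and "gfun A xs s = wl1 A x"
    and "\<And>y. y \<in> feas A xs s \<Longrightarrow> wl1 A x \<le> wl1 A y"
proof -
  have "feas A xs s \<noteq> {}" using assms by (simp add: Sset_def)
  then obtain x where "x \<in> feas A xs s" "\<forall>y\<in>feas A xs s. wl1 A x \<le> wl1 A y"
    using continuous_attains_inf[OF compact_feas _ continuous_on_wl1] by blast
  with gfun_eq_minimum that show thesis by blast
qed

lemma gfun_antimono:
  assumes "s \<in> Sset A xs" and "s \<le> t"
  shows "gfun A xs t \<le> gfun A xs s"
proof -
  have "bdd_below (wl1 A ` feas A xs t)"
    by (rule bdd_belowI[of _ 0]) (auto simp: wl1_nonneg)
  then show ?thesis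
    using assms feas_mono[OF \<open>s \<le> t\<close>] unfolding gfun_def Sset_def
    by (intro cInf_superset_mono) auto
qed

lemma inner_mult_vec_eq_sum:
  "c \<bullet> ((M::real^'n::finite^'m::finite) *v x) = (\<Sum>i\<in>UNIV. x $ i * ((M *v axis i 1) \<bullet> c))"
proof -
  have "c \<bullet> (M *v x) = (\<Sum>j\<in>UNIV. \<Sum>i\<in>UNIV. x $ i * (M $ j $ i * c $ j))"
    by (simp add: inner_vec_def matrix_vector_mult_def sum_distrib_left mult_ac)
  also have "\<dots> = (\<Sum>i\<in>UNIV. \<Sum>j\<in>UNIV. x $ i * (M $ j $ i * c $ j))"
    by (rule sum.swap)
  also have "\<dots> = (\<Sum>i\<in>UNIV. x $ i * ((M *v axis i 1) \<bullet> c))"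
    by (simp add: inner_vec_def matrix_vector_mult_def axis_def if_distrib sum_distrib_left
        cong: if_cong)
  finally show ?thesis .
qed

text \<open>No Penrose equation is needed: \<open>P x = A\<^sup>\<dagger> (A x)\<close> for whatever matrix \<open>pinv A\<close> denotes.\<close>
lemma projP_mult_eq_if_mult_eq:
  "A *v x = A *v y \<Longrightarrow> projP A *v x = projP A *v y"
  by (simp add: projP_def matrix_vector_mul_assoc[symmetric])

lemma inner_projP_axis: "(projP A *v axis i 1) \<bullet> c = wts A i * cert_coeff A c i"
  by (cases "projP A *v axis i 1 = 0") (simp_all add: cert_coeff_def wts_def)

lemma wts_pos_if_cert_coeff_eq_1:
  assumes "cert_coeff A c i = 1"
  shows "0 < wts A i"
proof -
  have "wts A i \<noteq> 0" using assms by (auto simp: cert_coeff_def wts_def)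
  then show ?thesis by (simp add: wts_def)
qed

lemma inner_projP_eq_sum:
  "c \<bullet> (projP A *v x) = (\<Sum>i\<in>UNIV. wts A i * x $ i * cert_coeff A c i)"
  by (simp add: inner_mult_vec_eq_sum inner_projP_axis mult_ac)

lemma wl1_eq_sum_if_nonneg:
  "(\<And>i. 0 \<le> x $ i) \<Longrightarrow> wl1 A x = (\<Sum>i\<in>UNIV. wts A i * x $ i)"
  unfolding wl1_def by (intro sum.cong) (auto simp: wts_def)

lemma wl1_minus_inner_projP:
  assumes "\<And>i. 0 \<le> x $ i"
  shows "wl1 A x - c \<bullet> (projP A *v x) = (\<Sum>i\<in>UNIV. wts A i * x $ i * (1 - cert_coeff A c i))"
  by (simp add: wl1_eq_sum_if_nonneg[OF assms] inner_projP_eq_sum sum_subtractf[symmetric]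
      algebra_simps)

lemma inner_projP_le_wl1:
  assumes "\<And>i. cert_coeff A c i \<le> 1" and "\<And>i. 0 \<le> x $ i"
  shows "c \<bullet> (projP A *v x) \<le> wl1 A x"
proof -
  have "0 \<le> (\<Sum>i\<in>UNIV. wts A i * x $ i * (1 - cert_coeff A c i))"
    using assms by (intro sum_nonneg) (simp add: wts_def)
  then show ?thesis using wl1_minus_inner_projP[OF assms(2), of A c] by simp
qed

lemma inner_projP_eq_wl1:
  assumes "\<And>i. 0 \<le> x $ i" and "\<And>i. x $ i \<noteq> 0 \<Longrightarrow> cert_coeff A c i = 1"
  shows "c \<bullet> (projP A *v x) = wl1 A x"
proof -
  have "(\<Sum>i\<in>UNIV. wts A i * x $ i * (1 - cert_coeff A c i)) = 0"
    using assms(2) by (intro sum.neutral) force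
  then show ?thesis using wl1_minus_inner_projP[OF assms(1), of A c] by simp
qed

lemma vanishes_if_wl1_le_inner_projP:
  assumes "\<And>i. cert_coeff A c i \<le> 1" and "\<And>i. 0 \<le> x $ i"
    and "wl1 A x \<le> c \<bullet> (projP A *v x)" and "cert_coeff A c i < 1"
  shows "wts A i * x $ i = 0"
proof -
  let ?t = "\<lambda>i. wts A i * x $ i * (1 - cert_coeff A c i)"
  have nonneg: "\<forall>i\<in>UNIV. 0 \<le> ?t i"
    using assms(1,2) by (simp add: wts_def)
  have "sum ?t UNIV = 0"
    using assms(3) wl1_minus_inner_projP[OF assms(2), of A c] nonneg
    by (simp add: antisym sum_nonneg)
  then have "?t i = 0" using nonneg by (simp add: sum_nonneg_eq_0_iff)
  then show ?thesis using assms(4) by simp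
qed

lemma nth_sum_scaled_axis:
  "(\<Sum>j\<in>J. k *\<^sub>R axis j (1::real)) $ i = (if i \<in> J then k else 0)"
  by (simp add: sum_component axis_def if_distrib cong: if_cong)

lemma wl1_less_wl1_sum_scaled_axis:
  assumes "J \<noteq> {}" and "\<And>j. j \<in> J \<Longrightarrow> 0 < wts A j"
    and "\<And>i. 0 \<le> x $ i" and "\<And>i. x $ i \<le> s" and "s < k"
    and "\<And>i. i \<notin> J \<Longrightarrow> wts A i * x $ i = 0"
  shows "wl1 A x < wl1 A (\<Sum>j\<in>J. k *\<^sub>R axis j 1)"
proof -
  have "wl1 A x = (\<Sum>i\<in>J. wts A i * x $ i)"
    using assms(6) by (simp add: wl1_eq_sum_if_nonneg[OF assms(3)] sum.mono_neutral_right)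
  also have "\<dots> \<le> (\<Sum>i\<in>J. wts A i * s)"
    using assms(4) by (intro sum_mono mult_left_mono) (auto simp: wts_def)
  also have "\<dots> < (\<Sum>i\<in>J. wts A i * k)"
    using assms(1,2,5) by (intro sum_strict_mono) auto
  also have "\<dots> = (\<Sum>i\<in>UNIV. wts A i * (if i \<in> J then k else 0))"
    by (simp add: if_distrib sum.If_cases)
  also have "\<dots> = wl1 A (\<Sum>j\<in>J. k *\<^sub>R axis j 1)"
    using assms(5) order_trans[OF assms(3,4)]
    by (subst wl1_eq_sum_if_nonneg) (simp_all only: nth_sum_scaled_axis, auto)
  finally show ?thesis .
qed

lemma inner_projP_feas_eq_wl1:
  fixes J :: "'n::finite set" and k :: real
  defines "xs \<equiv> (\<Sum>j\<in>J. k *\<^sub>R axis j (1::real))"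
  assumes a_J: "\<And>j. j \<in> J \<Longrightarrow> cert_coeff A c j = 1" and "0 \<le> k"
    and x: "x \<in> feas A xs s"
  shows "c \<bullet> (projP A *v x) = wl1 A xs"
proof -
  have "c \<bullet> (projP A *v xs) = wl1 A xs"
    using \<open>0 \<le> k\<close> a_J nth_sum_scaled_axis[where J = J and k = k, folded xs_def]
    by (intro inner_projP_eq_wl1) (auto split: if_splits)
  moreover have "projP A *v x = projP A *v xs"
    using x by (intro projP_mult_eq_if_mult_eq) (simp add: feas_def)
  ultimately show ?thesis by simp
qed

lemma wl1_sum_scaled_axis_le_feas:
  fixes J :: "'n::finite set" and k :: real
  defines "xs \<equiv> (\<Sum>j\<in>J. k *\<^sub>R axis j (1::real))"
  assumes a_le: "\<And>i. cert_coeff A c i \<le> 1" and a_J: "\<And>j. j \<in> J \<Longrightarrow> cert_coeff A c j = 1"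
    and "0 \<le> k" and x: "x \<in> feas A xs s"
  shows "wl1 A xs \<le> wl1 A x"
  using inner_projP_le_wl1[OF a_le] inner_projP_feas_eq_wl1[OF a_J \<open>0 \<le> k\<close> x[unfolded xs_def]] x
  unfolding xs_def by (force simp: feas_def)

lemma wl1_sum_scaled_axis_less_gfun:
  fixes J :: "'n::finite set" and k :: real
  defines "xs \<equiv> (\<Sum>j\<in>J. k *\<^sub>R axis j (1::real))"
  assumes a_le: "\<And>i. cert_coeff A c i \<le> 1" and a_J: "\<And>j. j \<in> J \<Longrightarrow> cert_coeff A c j = 1"
    and a_Jc: "\<And>i. i \<notin> J \<Longrightarrow> cert_coeff A c i < 1" and "J \<noteq> {}"
    and s: "s \<in> Sset A xs" and "s < k"
  shows "wl1 A xs < gfun A xs s"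
proof (rule ccontr)
  obtain x where x: "x \<in> feas A xs s" "gfun A xs s = wl1 A x"
    using gfun_attained[OF s] by blast
  have x_bounds: "0 \<le> x $ i" "x $ i \<le> s" for i using x(1) by (auto simp: feas_def)
  have "0 \<le> k" using s \<open>s < k\<close> by (simp add: Sset_def)
  note cost_x = inner_projP_feas_eq_wl1[OF a_J this x(1)[unfolded xs_def]]
  assume "\<not> wl1 A xs < gfun A xs s"
  then have "wl1 A x \<le> c \<bullet> (projP A *v x)" using x cost_x unfolding xs_def by simp
  then have "wts A i * x $ i = 0" if "i \<notin> J" for i
    using vanishes_if_wl1_le_inner_projP[OF a_le x_bounds(1)] a_Jc[OF that] by blast
  then have "wl1 A x < wl1 A xs"
    unfolding xs_def using \<open>J \<noteq> {}\<close> wts_pos_if_cert_coeff_eq_1[OF a_J] x_bounds \<open>s < k\<close>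
    by (intro wl1_less_wl1_sum_scaled_axis) auto
  then show False
    using wl1_sum_scaled_axis_le_feas[OF a_le a_J \<open>0 \<le> k\<close> x(1)[unfolded xs_def]]
    unfolding xs_def by simp
qed

theorem corollary4:
  fixes A :: "real^'n::finite^'m::finite" and k :: real and J :: "'n set" and c :: "real^'n"
  assumes not_null: "\<And>i. A *v axis i 1 \<noteq> 0"
    and k_pos: "k > 0"
    and J_ne: "J \<noteq> {}"
    and cJ: "\<And>j. j \<in> J \<Longrightarrow> ((1 / norm (projP A *v axis j 1)) *\<^sub>R (projP A *v axis j 1)) \<bullet> c = 1"
    and cJc: "\<And>i. i \<notin> J \<Longrightarrow> ((1 / norm (projP A *v axis i 1)) *\<^sub>R (projP A *v axis i 1)) \<bullet> c < 1"
  defines "xs \<equiv> (\<Sum>j\<in>J. k *\<^sub>R axis j (1::real))"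
  shows "(\<forall>s\<in>Sset A xs. \<forall>t\<in>Sset A xs. s \<le> t \<longrightarrow> gfun A xs t \<le> gfun A xs s)
       \<and> (\<forall>s\<in>Sset A xs. s < k \<longrightarrow> gfun A xs s > wl1 A xs)
       \<and> (\<forall>s. k \<le> s \<longrightarrow> gfun A xs s = wl1 A xs)"
proof -
  have a_J: "cert_coeff A c j = 1" if "j \<in> J" for j
    using cJ[OF that] unfolding cert_coeff_def .
  have a_Jc: "cert_coeff A c i < 1" if "i \<notin> J" for i
    using cJc[OF that] unfolding cert_coeff_def .
  have a_le: "cert_coeff A c i \<le> 1" for i
    using a_J a_Jc by (cases "i \<in> J") (auto intro: less_imp_le)
  have optimal: "wl1 A xs \<le> wl1 A x" if "x \<in> feas A xs s" for x s
    using wl1_sum_scaled_axis_le_feas[OF a_le a_J] k_pos that unfolding xs_def by simp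
  have "gfun A xs s = wl1 A xs" if "k \<le> s" for s
  proof (rule gfun_eq_minimum[OF _ optimal])
    show "xs \<in> feas A xs s"
      using that k_pos nth_sum_scaled_axis[where J = J and k = k, folded xs_def]
      by (auto simp: feas_def)
  qed
  moreover have "wl1 A xs < gfun A xs s" if "s \<in> Sset A xs" and "s < k" for s
    using wl1_sum_scaled_axis_less_gfun[OF a_le a_J a_Jc J_ne] that unfolding xs_def by blast
  ultimately show ?thesis using gfun_antimono by blast
qed

end
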